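(* $\mathbf{CL7}$ proves (derives) every binary tautological $\to$-sequent.
   Context: $\to$-formulas are built from propositional atoms with binary $\to$; a $\to$-sequent is $\Gamma\Rightarrow F$ with $\Gamma$ a finite multiset of $\to$-formulas and $F$ a $\to$-formula. A sequent $E_1,\dots,E_n\Rightarrow F$ is tautological (resp. binary) if the classical formula $E_1\wedge\dots\wedge E_n\to F$ is a classical tautology (resp. has no atom occurring more than twice). $\mathbf{CL7}$ has axioms all sequents $\Gamma,F\Rightarrow F$ and exactly two rules: Right $\to$: from $\Gamma,E\Rightarrow F$ infer $\Gamma\Rightarrow E\to F$; Left $\to$: from $\Gamma,F\Rightarrow G$ and $\Delta\Rightarrow E$ infer $\Gamma,\Delta,E\to F\Rightarrow G$ (no contraction). *)

theory Defs
  imports Main "HOL-Library.Multiset"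
begin

datatype 'a fm = Atom 'a | Imp "'a fm" "'a fm"

fun eval :: "('a \<Rightarrow> bool) \<Rightarrow> 'a fm \<Rightarrow> bool" where
  "eval v (Atom p) = v p"
| "eval v (Imp A B) = (eval v A \<longrightarrow> eval v B)"

fun occ :: "'a \<Rightarrow> 'a fm \<Rightarrow> nat" where
  "occ p (Atom q) = (if p = q then 1 else 0)"
| "occ p (Imp A B) = occ p A + occ p B"

definition tautological :: "'a fm multiset \<Rightarrow> 'a fm \<Rightarrow> bool" where
  "tautological \<Gamma> F \<longleftrightarrow> (\<forall>v. (\<forall>E \<in># \<Gamma>. eval v E) \<longrightarrow> eval v F)"

definition binary :: "'a fm multiset \<Rightarrow> 'a fm \<Rightarrow> bool" where
  "binary \<Gamma> F \<longleftrightarrow> (\<forall>p. (\<Sum>E\<in>#\<Gamma>. occ p E) + occ p F \<le> 2)"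

inductive CL7 :: "'a fm multiset \<Rightarrow> 'a fm \<Rightarrow> bool" where
  ax: "CL7 (\<Gamma> + {#F#}) F"
| impR: "CL7 (\<Gamma> + {#E#}) F \<Longrightarrow> CL7 \<Gamma> (Imp E F)"
| impL: "CL7 (\<Gamma> + {#F#}) G \<Longrightarrow> CL7 \<Delta> E \<Longrightarrow> CL7 (\<Gamma> + \<Delta> + {#Imp E F#}) G"

end

theory Submission
  imports Defs
begin

(*
  If F = E -> F' we apply Right-> to the (still binary, still tautological) sequent
  Gamma, E => F'.  If F is an atom q that is not itself a hypothesis, some hypothesis
  A -> B has head q; binarity forces q to occur nowhere else, so Gamma' => A and
  Gamma' => B -> q are tautological, where Gamma = Gamma', A -> B.  The key fact
  (split_hypotheses) is that, for binary data, a context proving two goals can be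
  partitioned into two disjoint parts proving one goal each: collect the hypotheses
  whose head is "reachable" from the positive atoms of A.  The two halves then feed
  Left->, with the induction hypothesis applied to Gamma1 => A and Gamma2, B => q.
*)

fun head :: "'a fm \<Rightarrow> 'a" where
  "head (Atom p) = p"
| "head (Imp A B) = head B"

text \<open>
  Atoms occurring positively, resp. negatively (inside the antecedents of an even,
  resp. odd, number of implications).
\<close>
fun pos :: "'a fm \<Rightarrow> 'a set" and neg :: "'a fm \<Rightarrow> 'a set" where
  "pos (Atom p) = {p}"
| "pos (Imp A B) = neg A \<union> pos B"
| "neg (Atom p) = {}"
| "neg (Imp A B) = pos A \<union> neg B"

fun fsize :: "'a fm \<Rightarrow> nat" where
  "fsize (Atom p) = 1"
| "fsize (Imp A B) = fsize A + fsize B + 1"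

definition msize :: "'a fm multiset \<Rightarrow> 'a fm \<Rightarrow> nat" where
  "msize \<Gamma> F = (\<Sum>E\<in>#\<Gamma>. fsize E) + fsize F"

abbreviation occs :: "'a \<Rightarrow> 'a fm multiset \<Rightarrow> nat" where
  "occs p \<Gamma> \<equiv> \<Sum>E\<in>#\<Gamma>. occ p E"

lemma head_pos: "head F \<in> pos F"
  by (induction F) auto

lemma occ_if_pos: "p \<in> pos F \<Longrightarrow> occ p F \<ge> 1"
  and occ_if_neg: "p \<in> neg F \<Longrightarrow> occ p F \<ge> 1"
  by (induction F) auto

lemma occ_if_pos_neg: "p \<in> pos F \<Longrightarrow> p \<in> neg F \<Longrightarrow> occ p F \<ge> 2"
proof (induction F)
  case (Imp A B)
  then show ?case using occ_if_pos[of p A] occ_if_neg[of p A] occ_if_pos[of p B] occ_if_neg[of p B]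
    by auto
qed simp

lemma occ_le_occs: "D \<in># \<Gamma> \<Longrightarrow> occ p D \<le> occs p \<Gamma>"
  by (metis le_add1 multi_member_split sum_mset.insert image_mset_add_mset)

lemma occs_remove: "D \<in># \<Gamma> \<Longrightarrow> occs p \<Gamma> = occ p D + occs p (\<Gamma> - {#D#})"
  by (metis image_mset_add_mset insert_DiffM sum_mset.insert)

lemma eval_head: "v (head F) \<Longrightarrow> eval v F"
  by (induction F) auto

lemma eval_mono:
  assumes "\<forall>p\<in>pos F. v p \<longrightarrow> w p" and "\<forall>p\<in>neg F. w p \<longrightarrow> v p" and "eval v F"
  shows "eval w F"
  using assms
proof (induction F arbitrary: v w)
  case (Imp A B)
  have "eval v A" if "eval w A" using Imp.IH(1)[of w v] Imp.prems that by auto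
  then show ?case using Imp.IH(2)[of v w] Imp.prems by auto
qed simp

lemma eval_upd: "occ p F = 0 \<Longrightarrow> eval (v(p := b)) F = eval v F"
  by (induction F) auto

text \<open>
  Hypotheses whose heads neither occur positively in the goal nor negatively in the
  remaining hypotheses can be dropped: making all their heads true satisfies them
  without helping the goal or hurting the other hypotheses.
\<close>
lemma drop_hypotheses:
  assumes taut: "tautological (\<Gamma> + \<Delta>) X"
    and irrelevant: "\<forall>D\<in>#\<Delta>. head D \<notin> pos X \<and> (\<forall>E\<in>#\<Gamma>. head D \<notin> neg E)"
  shows "tautological \<Gamma> X"
  unfolding tautological_def
proof (intro allI impI)
  fix v assume v: "\<forall>E\<in>#\<Gamma>. eval v E"
  define H where "H = head ` set_mset \<Delta>"
  define w where "w = (\<lambda>p. p \<in> H \<or> v p)"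
  have "eval w E" if "E \<in># \<Delta>" for E
    using that eval_head[of w E] unfolding w_def H_def by simp
  moreover have "eval w E" if E: "E \<in># \<Gamma>" for E
  proof (rule eval_mono[of E v])
    show "\<forall>p\<in>neg E. w p \<longrightarrow> v p" using irrelevant E unfolding w_def H_def by blast
  qed (use v E in \<open>auto simp: w_def\<close>)
  ultimately have "\<forall>E\<in>#\<Gamma> + \<Delta>. eval w E" by auto
  then have "eval w X" using taut unfolding tautological_def by blast
  then show "eval v X"
    by (rule eval_mono[rotated 2]) (use irrelevant in \<open>auto simp: w_def H_def\<close>)
qed

inductive_set reach :: "'a fm multiset \<Rightarrow> 'a fm \<Rightarrow> 'a set" for \<Gamma> A where
  goal: "p \<in> pos A \<Longrightarrow> p \<in> reach \<Gamma> A"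
| hyp: "D \<in># \<Gamma> \<Longrightarrow> head D \<in> reach \<Gamma> A \<Longrightarrow> p \<in> neg D \<Longrightarrow> p \<in> reach \<Gamma> A"

lemma reach_part_proves:
  assumes "tautological \<Gamma> A"
  shows "tautological (filter_mset (\<lambda>D. head D \<in> reach \<Gamma> A) \<Gamma>) A"
proof (rule drop_hypotheses)
  show "tautological ({#D \<in># \<Gamma>. head D \<in> reach \<Gamma> A#} + {#D \<in># \<Gamma>. head D \<notin> reach \<Gamma> A#}) A"
    using assms by (simp flip: multiset_partition)
qed (auto intro: reach.intros)

text \<open>
  Each head of a hypothesis with reachable head is used twice within those hypotheses
  and A: once as a head, and once where it became reachable.
\<close>
lemma reach_head_used_twice:
  assumes D: "D \<in># \<Gamma>1" and \<Gamma>1: "\<Gamma>1 = filter_mset (\<lambda>D. head D \<in> reach \<Gamma> A) \<Gamma>"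
  shows "occs (head D) \<Gamma>1 + occ (head D) A \<ge> 2"
proof -
  let ?h = "head D"
  have split: "occs ?h \<Gamma>1 = occ ?h D + occs ?h (\<Gamma>1 - {#D#})" using occs_remove[OF D] .
  have once: "occ ?h D \<ge> 1" using occ_if_pos[OF head_pos] .
  have "?h \<in> reach \<Gamma> A" using D \<Gamma>1 by simp
  then show ?thesis
  proof cases
    case goal
    then show ?thesis using occ_if_pos[of ?h A] once split by linarith
  next
    case (hyp D')
    then have D'1: "D' \<in># \<Gamma>1" using \<Gamma>1 by simp
    show ?thesis
    proof (cases "D' = D")
      case True
      then show ?thesis using occ_if_pos_neg[OF head_pos] hyp split by fastforce
    next
      case False
      then have "D' \<in># \<Gamma>1 - {#D#}" using D'1 by (simp add: in_diff_count)
      then have "occ ?h D' \<le> occs ?h (\<Gamma>1 - {#D#})" by (rule occ_le_occs)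
      then show ?thesis using occ_if_neg[OF hyp(3)] once split by linarith
    qed
  qed
qed

lemma split_hypotheses:
  assumes tA: "tautological \<Gamma> A" and tB: "tautological \<Gamma> B"
    and bin: "\<And>p. occs p \<Gamma> + occ p A + occ p B \<le> 2"
  shows "\<exists>\<Gamma>1 \<Gamma>2. \<Gamma> = \<Gamma>1 + \<Gamma>2 \<and> tautological \<Gamma>1 A \<and> tautological \<Gamma>2 B"
proof -
  define \<Gamma>1 where "\<Gamma>1 = filter_mset (\<lambda>D. head D \<in> reach \<Gamma> A) \<Gamma>"
  define \<Gamma>2 where "\<Gamma>2 = filter_mset (\<lambda>D. head D \<notin> reach \<Gamma> A) \<Gamma>"
  have \<Gamma>: "\<Gamma> = \<Gamma>1 + \<Gamma>2" unfolding \<Gamma>1_def \<Gamma>2_def by (rule multiset_partition)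
  have unused: "occs (head D) \<Gamma>2 + occ (head D) B = 0" if "D \<in># \<Gamma>1" for D
  proof -
    have "occs (head D) \<Gamma> = occs (head D) \<Gamma>1 + occs (head D) \<Gamma>2" using \<Gamma> by simp
    then show ?thesis using reach_head_used_twice[OF that \<Gamma>1_def] bin[of "head D"] by linarith
  qed
  have "tautological \<Gamma>2 B"
  proof (rule drop_hypotheses)
    show "tautological (\<Gamma>2 + \<Gamma>1) B" using tB \<Gamma> by (simp add: add.commute)
    show "\<forall>D\<in>#\<Gamma>1. head D \<notin> pos B \<and> (\<forall>E\<in>#\<Gamma>2. head D \<notin> neg E)"
    proof (intro ballI conjI)
      fix D assume "D \<in># \<Gamma>1"
      then have in_\<Gamma>2: "occs (head D) \<Gamma>2 = 0" and in_B: "occ (head D) B = 0"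
        using unused by (simp_all only: add_is_0)
      show "head D \<notin> pos B" using in_B occ_if_pos by fastforce
      show "head D \<notin> neg E" if "E \<in># \<Gamma>2" for E
        using in_\<Gamma>2 occ_le_occs[OF that, of "head D"] occ_if_neg[of "head D" E]
        by (auto simp del: sum_mset_0_iff)
    qed
  qed
  then show ?thesis using \<Gamma> reach_part_proves[OF tA] unfolding \<Gamma>1_def by blast
qed

text \<open>
  If an atom q follows from a context not containing it, some hypothesis A -> B has
  head q (otherwise making q alone false refutes the sequent).
\<close>
lemma atom_goal_premise:
  assumes "tautological \<Gamma> (Atom q)" and "Atom q \<notin># \<Gamma>"
  obtains A B \<Gamma>' where "\<Gamma> = add_mset (Imp A B) \<Gamma>'" and "head B = q"
proof -
  have "\<exists>C\<in>#\<Gamma>. head C = q"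
  proof (rule ccontr)
    assume "\<not> ?thesis"
    then have "\<forall>E\<in>#\<Gamma>. eval (\<lambda>p. p \<noteq> q) E" using eval_head[of "\<lambda>p. p \<noteq> q"] by blast
    then show False using assms(1) unfolding tautological_def by fastforce
  qed
  then obtain C where C: "C \<in># \<Gamma>" "head C = q" by blast
  then obtain A B where "C = Imp A B" using assms(2) by (cases C) auto
  then show ?thesis using that C by (metis head.simps(2) multi_member_split)
qed

lemma atom_antecedent_taut:
  assumes taut: "tautological (add_mset (Imp A B) \<Gamma>') (Atom q)"
    and fresh: "occs q \<Gamma>' + occ q A = 0"
  shows "tautological \<Gamma>' A"
  unfolding tautological_def
proof (intro allI impI)
  fix v assume v: "\<forall>E\<in>#\<Gamma>'. eval v E"
  let ?w = "v(q := False)"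
  have "eval ?w E" if "E \<in># \<Gamma>'" for E
    using that v eval_upd[of q E v False] occ_le_occs[OF that, of q] fresh by simp
  then have "eval ?w (Imp A B) \<longrightarrow> eval ?w (Atom q)"
    using taut unfolding tautological_def by auto
  then show "eval v A" using eval_upd[of q A v False] fresh by auto
qed

lemma atom_step:
  assumes taut: "tautological \<Gamma> (Atom q)" and bin: "binary \<Gamma> (Atom q)"
    and notin: "Atom q \<notin># \<Gamma>"
  obtains A B \<Gamma>1 \<Gamma>2 where "\<Gamma> = \<Gamma>2 + \<Gamma>1 + {#Imp A B#}"
    and "tautological \<Gamma>1 A" and "binary \<Gamma>1 A"
    and "tautological (\<Gamma>2 + {#B#}) (Atom q)" and "binary (\<Gamma>2 + {#B#}) (Atom q)"
proof -
  obtain A B \<Gamma>' where \<Gamma>: "\<Gamma> = add_mset (Imp A B) \<Gamma>'" and hB: "head B = q"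
    using atom_goal_premise[OF taut notin] .
  have binp: "occs p \<Gamma>' + occ p A + occ p B + occ p (Atom q) \<le> 2" for p
    using bin unfolding binary_def \<Gamma> by (simp add: ac_simps)
  have "occs q \<Gamma>' + occ q A = 0"
    using binp[of q] occ_if_pos[OF head_pos, of B] hB by (simp del: sum_mset_0_iff)
  then have tA: "tautological \<Gamma>' A" by (rule atom_antecedent_taut[OF taut[unfolded \<Gamma>]])
  have tB: "tautological \<Gamma>' (Imp B (Atom q))"
    using taut unfolding \<Gamma> tautological_def by auto
  have "occs p \<Gamma>' + occ p A + occ p (Imp B (Atom q)) \<le> 2" for p
    using binp[of p] by (simp add: add.assoc)
  then obtain \<Gamma>1 \<Gamma>2 where \<Gamma>': "\<Gamma>' = \<Gamma>1 + \<Gamma>2" and t1: "tautological \<Gamma>1 A"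
    and t2: "tautological \<Gamma>2 (Imp B (Atom q))"
    using split_hypotheses[OF tA tB] by blast
  have bin12: "occs p \<Gamma>1 + occs p \<Gamma>2 + occ p A + occ p B + occ p (Atom q) \<le> 2" for p
    using binp[of p] unfolding \<Gamma>' by simp
  show ?thesis
  proof (rule that)
    show "\<Gamma> = \<Gamma>2 + \<Gamma>1 + {#Imp A B#}" using \<Gamma> \<Gamma>' by (simp add: ac_simps)
    show "tautological (\<Gamma>2 + {#B#}) (Atom q)" using t2 unfolding tautological_def by auto
    show "binary \<Gamma>1 A" unfolding binary_def
    proof
      show "occs p \<Gamma>1 + occ p A \<le> 2" for p using bin12[of p] by linarith
    qed
    show "binary (\<Gamma>2 + {#B#}) (Atom q)" unfolding binary_def
    proof
      show "occs p (\<Gamma>2 + {#B#}) + occ p (Atom q) \<le> 2" for p using bin12[of p] by simp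
    qed
  qed (rule t1)
qed

theorem lemma4p3:
  fixes \<Gamma> :: "'a fm multiset" and F :: "'a fm"
  assumes "tautological \<Gamma> F" and "binary \<Gamma> F"
  shows "CL7 \<Gamma> F"
  using assms
proof (induction "msize \<Gamma> F" arbitrary: \<Gamma> F rule: less_induct)
  case less
  show ?case
  proof (cases F)
    case (Imp E F')
    have "tautological (\<Gamma> + {#E#}) F'"
      using less.prems(1) unfolding Imp tautological_def by auto
    moreover have "binary (\<Gamma> + {#E#}) F'"
      using less.prems(2) unfolding Imp binary_def by (simp add: ac_simps)
    ultimately have "CL7 (\<Gamma> + {#E#}) F'" using less.hyps by (simp add: msize_def Imp)
    then show ?thesis unfolding Imp by (rule CL7.impR)
  next
    case (Atom q)
    show ?thesis
    proof (cases "Atom q \<in># \<Gamma>")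
      case True
      then show ?thesis using CL7.ax[of "\<Gamma> - {#Atom q#}" "Atom q"] Atom by simp
    next
      case False
      obtain A B \<Gamma>1 \<Gamma>2 where \<Gamma>: "\<Gamma> = \<Gamma>2 + \<Gamma>1 + {#Imp A B#}"
        and "tautological \<Gamma>1 A" "binary \<Gamma>1 A"
        and "tautological (\<Gamma>2 + {#B#}) (Atom q)" "binary (\<Gamma>2 + {#B#}) (Atom q)"
        by (rule atom_step[OF less.prems[unfolded Atom] False])
      then have "CL7 (\<Gamma>2 + {#B#}) (Atom q)" "CL7 \<Gamma>1 A"
        using less.hyps by (simp_all add: msize_def Atom \<Gamma>)
      then show ?thesis unfolding Atom \<Gamma> by (rule CL7.impL)
    qed
  qed
qed

end
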